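(* Let $\|\cdot\|$ be a strictly convex norm on $\mathbb{R}^n$ that is continuously differentiable on $\mathbb{R}^n\setminus\{0\}$, with gradient $N(x)$ at $x\neq0$; set $h(x,y)=\|y\|-\langle y,N(x)\rangle$ for $x\ne0$ and $\sigma(x,t)=\max_{\|y\|\le t}h(x,x+y)$ for $x\ne 0$, $t>0$. Assume $\|\cdot\|$ is geometrically convex with constants $1,\Lambda$, where $\Lambda>2$, i.e. $\Lambda h(x,x+y)\le h(x,x+2y)$ whenever $x\ne 0$ and $\|y\|\le\|x\|$. Let $l_0,l_1,\bar l_0,\bar l_1\in\mathbb{R}^n$ satisfy $$\|l_1-\bar l_0\|\ge\|l_1-l_0\|,\quad \|\bar l_1-l_0\|\ge\|\bar l_1-\bar l_0\|,\quad \|l_1-l_0\|=\|\bar l_1-\bar l_0\|=1,$$ and let $l=[l_0,l_1]$, $\bar l=[\bar l_0,\bar l_1]$ denote the closed segments, $e=l_1-l_0$, $\bar e=\bar l_1-\bar l_0$. Assume $0<\delta<1/4$, $x_0\in\mathbb{R}^n$, and $$l\cap\bar B_\delta(x_0)\ne\emptyset,\qquad \bar l\cap \bar B_\delta(x_0)\neq\emptyset.$$ Assume moreover that $\rho>3\delta$, $l_1,l_0\notin\bar B_\rho(x_0)$, $\kappa\ge \frac{4}{\rho-3\delta}$, and $$\sigma(e,\kappa\delta)\le\sigma(\bar e,\kappa\delta).$$ Then $$h(\bar e,\bar l_1-l_0)+h(\bar e,l_1-\bar l_0)\le \frac{\Lambda}{\Lambda-2}\,\sigma(\bar e,\kapp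a\delta).$$
   Context: $\langle\cdot,\cdot\rangle$ is the Euclidean inner product; $\bar B_s(x_0)=\{x:\|x-x_0\|\le s\}$ is the closed ball in the norm $\|\cdot\|$. Strict convexity of the norm means: if $x,y\neq0$ and $\|x+y\|=\|x\|+\|y\|$, then $y=\alpha x$ for some $\alpha>0$. *)

theory Defs
  imports "HOL-Analysis.Analysis"
begin

definition is_norm :: "(real^'n \<Rightarrow> real) \<Rightarrow> bool" where
  "is_norm nrm \<longleftrightarrow>
     (\<forall>x. 0 \<le> nrm x) \<and> (\<forall>x. nrm x = 0 \<longleftrightarrow> x = 0) \<and>
     (\<forall>a x. nrm (a *\<^sub>R x) = \<bar>a\<bar> * nrm x) \<and>
     (\<forall>x y. nrm (x + y) \<le> nrm x + nrm y)"

definition strictly_convex_norm :: "(real^'n \<Rightarrow> real) \<Rightarrow> bool" where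
  "strictly_convex_norm nrm \<longleftrightarrow>
     (\<forall>x y. x \<noteq> 0 \<and> y \<noteq> 0 \<and> nrm (x + y) = nrm x + nrm y \<longrightarrow>
            (\<exists>\<alpha>>0. y = \<alpha> *\<^sub>R x))"

definition hfun :: "(real^'n \<Rightarrow> real) \<Rightarrow> (real^'n \<Rightarrow> real^'n) \<Rightarrow> real^'n \<Rightarrow> real^'n \<Rightarrow> real" where
  "hfun nrm N x y = nrm y - y \<bullet> N x"

text \<open>sigma(x,t) = max over ||y|| <= t of h(x,x+y) (the max is attained; written as Sup)\<close>
definition sigma :: "(real^'n \<Rightarrow> real) \<Rightarrow> (real^'n \<Rightarrow> real^'n) \<Rightarrow> real^'n \<Rightarrow> real \<Rightarrow> real" where
  "sigma nrm N x t = (SUP y\<in>{y. nrm y \<le> t}. hfun nrm N x (x + y))"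

definition geometrically_convex :: "(real^'n \<Rightarrow> real) \<Rightarrow> (real^'n \<Rightarrow> real^'n) \<Rightarrow> real \<Rightarrow> bool" where
  "geometrically_convex nrm N \<Lambda> \<longleftrightarrow>
     (\<forall>x y. x \<noteq> 0 \<and> nrm y \<le> nrm x \<longrightarrow>
        \<Lambda> * hfun nrm N x (x + y) \<le> hfun nrm N x (x + 2 *\<^sub>R y))"

definition nball :: "(real^'n \<Rightarrow> real) \<Rightarrow> real^'n \<Rightarrow> real \<Rightarrow> (real^'n) set" where
  "nball nrm x0 s = {x. nrm (x - x0) \<le> s}"

end

theory Submission imports Defs begin

text \<open>
  Let \<open>e = l1 - l0\<close> and \<open>E = lb1 - lb0\<close>. The function \<open>h(E, \<cdot>)\<close> is sublinear and vanishes at \<open>E\<close>.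
  Write the points of the two segments in the \<open>\<delta>\<close>-ball as \<open>l0 + s e\<close> and \<open>lb0 + t E\<close> and let \<open>d\<close>
  be their difference, so that \<open>lb1 - l0 = (1 - t) E + s e + d\<close> and \<open>l1 - lb0 = t E + (1 - s) e - d\<close>.
  Since \<open>l0, l1\<close> lie outside the \<open>\<rho>\<close>-ball and the cross distances are at least \<open>1\<close>, both \<open>s\<close> and
  \<open>t\<close> keep a distance \<open>2m = 4/\<kappa>\<close> from \<open>0\<close> and \<open>1\<close>. Split off \<open>s e + m E\<close> from the first vector:
  geometric convexity at the midpoint of \<open>E\<close> and \<open>e\<close> bounds its \<open>h\<close>-value by
  \<open>(s - (1 - 2/\<Lambda>) m) h(E, e)\<close>, while the rest is a multiple \<open>\<ge> m\<close> of \<open>E\<close> plus \<open>d\<close>, which after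
  scaling by \<open>1/m\<close> lies in the \<open>\<kappa>\<delta>\<close>-ball around \<open>E\<close> and so contributes at most \<open>m \<sigma>(E, \<kappa>\<delta>)\<close>.
  Treating the second vector alike, the sum \<open>T\<close> of the two \<open>h\<close>-values satisfies
  \<open>T \<le> (1 - 2(1 - 2/\<Lambda>) m) h(E, e) + 2m \<sigma>(E, \<kappa>\<delta>)\<close>; as the two vectors add up to \<open>e + E\<close>,
  also \<open>h(E, e) \<le> T\<close>, and solving for \<open>T\<close> gives the claim.
\<close>

context
  fixes nrm :: "real^'n \<Rightarrow> real"
  assumes norm: "is_norm nrm"
begin

lemma nrm_scaleR: "nrm (a *\<^sub>R x) = \<bar>a\<bar> * nrm x"
  using norm unfolding is_norm_def by blast

lemma nrm_triangle: "nrm (x + y) \<le> nrm x + nrm y"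
  using norm unfolding is_norm_def by blast

lemma nrm_zero: "nrm 0 = 0"
  using norm unfolding is_norm_def by blast

lemma nrm_minus: "nrm (- x) = nrm x"
  using nrm_scaleR[of "-1" x] by simp

lemma nrm_minus_commute: "nrm (x - y) = nrm (y - x)"
  using nrm_minus[of "x - y"] by simp

lemma nrm_triangle_diff: "nrm (x - z) \<le> nrm (x - y) + nrm (y - z)"
  using nrm_triangle[of "x - y" "y - z"] by simp

lemma nrm_convex_on_line: "convex_on UNIV (\<lambda>t::real. nrm (x + t *\<^sub>R z))"
proof (rule convex_onI)
  fix u a b :: real
  assume u: "0 < u" "u < 1"
  have "x + ((1 - u) * a + u * b) *\<^sub>R z = (1 - u) *\<^sub>R (x + a *\<^sub>R z) + u *\<^sub>R (x + b *\<^sub>R z)"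
    by (simp add: algebra_simps)
  then show "nrm (x + ((1 - u) *\<^sub>R a + u *\<^sub>R b) *\<^sub>R z)
      \<le> (1 - u) * nrm (x + a *\<^sub>R z) + u * nrm (x + b *\<^sub>R z)"
    using nrm_triangle[of "(1 - u) *\<^sub>R (x + a *\<^sub>R z)" "u *\<^sub>R (x + b *\<^sub>R z)"] u
    by (simp add: nrm_scaleR)
qed simp

lemma nrm_above_tangent:
  assumes "(nrm has_derivative (\<lambda>v. v \<bullet> \<nu>)) (at x)"
  shows "nrm x + z \<bullet> \<nu> \<le> nrm (x + z)"
proof -
  have line: "((\<lambda>t. x + t *\<^sub>R z) has_derivative (\<lambda>t. t *\<^sub>R z)) (at 0)"
    by (auto intro!: derivative_eq_intros)
  have "((\<lambda>t. nrm (x + t *\<^sub>R z)) has_derivative (\<lambda>t. (t *\<^sub>R z) \<bullet> \<nu>)) (at 0)"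
    using has_derivative_compose[OF line, of nrm] assms by fastforce
  then have "((\<lambda>t. nrm (x + t *\<^sub>R z)) has_field_derivative z \<bullet> \<nu>) (at 0 within UNIV)"
    by (rule has_derivative_imp_has_field_derivative) simp
  from convex_on_imp_above_tangent[OF nrm_convex_on_line _ _ _ this, of 1]
  show ?thesis by simp
qed

lemma nrm_gradient_le:
  assumes "(nrm has_derivative (\<lambda>v. v \<bullet> \<nu>)) (at x)"
  shows "z \<bullet> \<nu> \<le> nrm z"
  using nrm_above_tangent[OF assms, of z] nrm_triangle[of x z] by simp

lemma nrm_gradient_self:
  assumes "(nrm has_derivative (\<lambda>v. v \<bullet> \<nu>)) (at x)"
  shows "x \<bullet> \<nu> = nrm x"
  using nrm_gradient_le[OF assms, of x] nrm_above_tangent[OF assms, of "- x"]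
  by (simp add: nrm_zero)

lemma hfun_add_le: "hfun nrm N x (v + w) \<le> hfun nrm N x v + hfun nrm N x w"
  using nrm_triangle[of v w] by (simp add: hfun_def inner_add_left)

lemma hfun_scaleR: "0 \<le> c \<Longrightarrow> hfun nrm N x (c *\<^sub>R v) = c * hfun nrm N x v"
  by (simp add: hfun_def nrm_scaleR algebra_simps)

lemma geometrically_convex_midpoint_le:
  assumes "geometrically_convex nrm N \<Lambda>" "x \<noteq> 0" "nrm e \<le> nrm x"
  shows "\<Lambda> * hfun nrm N x ((1 / 2) *\<^sub>R (x + e)) \<le> hfun nrm N x e"
proof -
  define y where "y = (1 / 2) *\<^sub>R (e - x)"
  have "nrm y \<le> nrm x"
    using nrm_triangle[of e "- x"] assms(3) by (simp add: y_def nrm_scaleR nrm_minus)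
  with assms(1,2) have "\<Lambda> * hfun nrm N x (x + y) \<le> hfun nrm N x (x + 2 *\<^sub>R y)"
    unfolding geometrically_convex_def by blast
  moreover have "x + y = (1 / 2) *\<^sub>R (x + e)" "x + 2 *\<^sub>R y = e"
    by (simp_all add: y_def vec_eq_iff field_simps)
  ultimately show ?thesis by simp
qed

lemma geometrically_convex_hfun_le:
  assumes "geometrically_convex nrm N \<Lambda>" "\<Lambda> > 0" "x \<noteq> 0" "nrm e \<le> nrm x"
    and "0 \<le> m" "m \<le> c"
  shows "hfun nrm N x (c *\<^sub>R e + m *\<^sub>R x) \<le> (c - (1 - 2 / \<Lambda>) * m) * hfun nrm N x e"
proof -
  have "c *\<^sub>R e + m *\<^sub>R x = (2 * m) *\<^sub>R ((1 / 2) *\<^sub>R (x + e)) + (c - m) *\<^sub>R e"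
    by (simp add: algebra_simps)
  then have "hfun nrm N x (c *\<^sub>R e + m *\<^sub>R x)
      \<le> 2 * m * hfun nrm N x ((1 / 2) *\<^sub>R (x + e)) + (c - m) * hfun nrm N x e"
    using hfun_add_le[of N x "(2 * m) *\<^sub>R ((1 / 2) *\<^sub>R (x + e))" "(c - m) *\<^sub>R e"] assms(5,6)
    by (simp add: hfun_scaleR del: scaleR_scaleR)
  also have "\<dots> \<le> 2 * m * (hfun nrm N x e / \<Lambda>) + (c - m) * hfun nrm N x e"
    using geometrically_convex_midpoint_le[OF assms(1,3,4)] assms(2,5)
    by (intro add_right_mono mult_left_mono) (simp_all add: pos_le_divide_eq mult.commute)
  also have "\<dots> = (c - (1 - 2 / \<Lambda>) * m) * hfun nrm N x e"
    by (simp add: algebra_simps)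
  finally show ?thesis .
qed

context
  fixes N :: "real^'n \<Rightarrow> real^'n" and x :: "real^'n"
  assumes grad: "(nrm has_derivative (\<lambda>v. v \<bullet> N x)) (at x)"
begin

lemma hfun_self: "hfun nrm N x x = 0"
  using nrm_gradient_self[OF grad] by (simp add: hfun_def)

lemma hfun_le_sigma:
  assumes "nrm y \<le> r"
  shows "hfun nrm N x (x + y) \<le> sigma nrm N x r"
  unfolding sigma_def
proof (rule cSUP_upper)
  show "bdd_above ((\<lambda>y. hfun nrm N x (x + y)) ` {y. nrm y \<le> r})"
  proof (rule bdd_aboveI2)
    fix y assume "y \<in> {y. nrm y \<le> r}"
    have "- ((x + y) \<bullet> N x) \<le> nrm (x + y)"
      using nrm_gradient_le[OF grad, of "- (x + y)"] nrm_minus[of "x + y"]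
      by (simp only: inner_minus_left)
    then have "hfun nrm N x (x + y) \<le> 2 * nrm (x + y)"
      by (simp add: hfun_def)
    also have "\<dots> \<le> 2 * (nrm x + r)"
      using nrm_triangle[of x y] \<open>y \<in> {y. nrm y \<le> r}\<close> by simp
    finally show "hfun nrm N x (x + y) \<le> 2 * (nrm x + r)" .
  qed
qed (use assms in simp)

lemma hfun_le_scaled_sigma:
  assumes "0 < m" "m \<le> m'" "nrm w \<le> m * r"
  shows "hfun nrm N x (m' *\<^sub>R x + w) \<le> m * sigma nrm N x r"
proof -
  have "hfun nrm N x (m' *\<^sub>R x + w)
      \<le> hfun nrm N x (m *\<^sub>R (x + (1 / m) *\<^sub>R w)) + hfun nrm N x ((m' - m) *\<^sub>R x)"
    using hfun_add_le[of N x "m *\<^sub>R (x + (1 / m) *\<^sub>R w)" "(m' - m) *\<^sub>R x"] \<open>0 < m\<close>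
    by (simp add: algebra_simps)
  also have "\<dots> = m * hfun nrm N x (x + (1 / m) *\<^sub>R w)"
    using assms by (simp add: hfun_scaleR hfun_self)
  also have "\<dots> \<le> m * sigma nrm N x r"
    using assms by (intro mult_left_mono hfun_le_sigma) (simp_all add: nrm_scaleR field_simps)
  finally show ?thesis .
qed

lemma hfun_le_add_hfun:
  assumes "a + b = e + x" "nrm e + nrm x \<le> nrm a + nrm b"
  shows "hfun nrm N x e \<le> hfun nrm N x a + hfun nrm N x b"
proof -
  have "a \<bullet> N x + b \<bullet> N x = e \<bullet> N x + nrm x"
    using nrm_gradient_self[OF grad] by (metis assms(1) inner_add_left)
  with assms(2) show ?thesis by (simp add: hfun_def)
qed

lemma hfun_combination_le:
  assumes "geometrically_convex nrm N \<Lambda>" "\<Lambda> > 0" "x \<noteq> 0" "nrm e \<le> nrm x"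
    and "0 < m" "m \<le> c" "2 * m \<le> m'" "nrm w \<le> m * r"
  shows "hfun nrm N x (c *\<^sub>R e + m' *\<^sub>R x + w)
    \<le> (c - (1 - 2 / \<Lambda>) * m) * hfun nrm N x e + m * sigma nrm N x r"
proof -
  have "c *\<^sub>R e + m' *\<^sub>R x + w = (c *\<^sub>R e + m *\<^sub>R x) + ((m' - m) *\<^sub>R x + w)"
    by (simp add: algebra_simps)
  then show ?thesis
    using hfun_add_le[of N x "c *\<^sub>R e + m *\<^sub>R x" "(m' - m) *\<^sub>R x + w"]
      geometrically_convex_hfun_le[OF assms(1-4), of m c]
      hfun_le_scaled_sigma[of m "m' - m" w r] assms(5-8)
    by (simp add: algebra_simps)
qed

lemma hfun_pair_le_sigma:
  assumes geo: "geometrically_convex nrm N \<Lambda>" and "\<Lambda> > 2" "x \<noteq> 0" "nrm e \<le> nrm x"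
    and "0 < m" "m \<le> s" "m \<le> 1 - s" "2 * m \<le> t" "2 * m \<le> 1 - t" "nrm d \<le> m * r"
    and a: "a = (1 - t) *\<^sub>R x + s *\<^sub>R e + d" and b: "b = t *\<^sub>R x + (1 - s) *\<^sub>R e - d"
    and "nrm e + nrm x \<le> nrm a + nrm b"
  shows "hfun nrm N x a + hfun nrm N x b \<le> \<Lambda> / (\<Lambda> - 2) * sigma nrm N x r"
proof -
  define u where "u = 1 - 2 / \<Lambda>"
  have u: "0 < u" "u < 1"
    using \<open>\<Lambda> > 2\<close> by (simp_all add: u_def)
  define T where "T = hfun nrm N x a + hfun nrm N x b"
  define S where "S = sigma nrm N x r"
  define \<phi> where "\<phi> = hfun nrm N x e"
  have a': "a = s *\<^sub>R e + (1 - t) *\<^sub>R x + d" and b': "b = (1 - s) *\<^sub>R e + t *\<^sub>R x + - d"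
    using a b by (simp_all add: algebra_simps)
  note piece = hfun_combination_le[OF geo _ \<open>x \<noteq> 0\<close> \<open>nrm e \<le> nrm x\<close> \<open>0 < m\<close>]
  have "hfun nrm N x a \<le> (s - u * m) * \<phi> + m * S"
    unfolding a' \<phi>_def S_def using piece[of s "1 - t" d r] assms(2,6-10) by (simp add: u_def)
  moreover have "hfun nrm N x b \<le> (1 - s - u * m) * \<phi> + m * S"
    unfolding b' \<phi>_def S_def using piece[of "1 - s" t "- d" r] assms(2,6-10)
    by (simp add: u_def nrm_minus)
  ultimately have T_le: "T \<le> (1 - 2 * u * m) * \<phi> + 2 * m * S"
    unfolding T_def by (simp add: algebra_simps)
  have "\<phi> \<le> T"
    unfolding \<phi>_def T_def by (rule hfun_le_add_hfun) (simp add: a b algebra_simps, fact)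
  moreover have "0 \<le> 1 - 2 * u * m"
  proof -
    have "u * m \<le> m"
      using u \<open>0 < m\<close> by (intro mult_left_le_one_le) auto
    then show ?thesis
      using assms(8,9) by (simp add: mult.assoc)
  qed
  ultimately have "(1 - 2 * u * m) * \<phi> \<le> (1 - 2 * u * m) * T"
    by (rule mult_left_mono)
  with T_le have "(2 * m) * (u * T) \<le> (2 * m) * S"
    by (simp add: algebra_simps)
  then have "T \<le> S / u"
    using \<open>0 < m\<close> u by (simp add: pos_le_divide_eq mult.commute)
  also have "S / u = \<Lambda> / (\<Lambda> - 2) * S"
    using \<open>\<Lambda> > 2\<close> by (simp add: u_def field_simps)
  finally show ?thesis
    unfolding T_def S_def .
qed

end

lemma unit_segments_near_point:
  assumes "nrm (l1 - l0) = 1" "nrm (lb1 - lb0) = 1"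
    and "1 \<le> nrm (lb1 - l0)" "1 \<le> nrm (l1 - lb0)"
    and "closed_segment l0 l1 \<inter> nball nrm x0 \<delta> \<noteq> {}"
    and "closed_segment lb0 lb1 \<inter> nball nrm x0 \<delta> \<noteq> {}"
    and "l0 \<notin> nball nrm x0 \<rho>" "l1 \<notin> nball nrm x0 \<rho>"
  obtains s t d where
    "lb1 - l0 = (1 - t) *\<^sub>R (lb1 - lb0) + s *\<^sub>R (l1 - l0) + d"
    "l1 - lb0 = t *\<^sub>R (lb1 - lb0) + (1 - s) *\<^sub>R (l1 - l0) - d"
    "nrm d \<le> 2 * \<delta>" "\<rho> - \<delta> < s" "\<rho> - \<delta> < 1 - s" "\<bar>s - t\<bar> \<le> 2 * \<delta>"
proof -
  obtain p s where p: "nrm (p - x0) \<le> \<delta>" "0 \<le> s" "s \<le> 1" "p = (1 - s) *\<^sub>R l0 + s *\<^sub>R l1"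
    using assms(5) by (fastforce simp: nball_def in_segment)
  obtain q t where q: "nrm (q - x0) \<le> \<delta>" "0 \<le> t" "t \<le> 1" "q = (1 - t) *\<^sub>R lb0 + t *\<^sub>R lb1"
    using assms(6) by (fastforce simp: nball_def in_segment)
  have "p - l0 = s *\<^sub>R (l1 - l0)" "l1 - p = (1 - s) *\<^sub>R (l1 - l0)"
    "q - lb0 = t *\<^sub>R (lb1 - lb0)" "lb1 - q = (1 - t) *\<^sub>R (lb1 - lb0)"
    using p(4) q(4) by (simp_all add: algebra_simps)
  then have lengths: "nrm (l0 - p) = s" "nrm (l1 - p) = 1 - s" "nrm (q - lb0) = t" "nrm (lb1 - q) = 1 - t"
    using p(2,3) q(2,3) assms(1,2) by (simp_all add: nrm_scaleR nrm_minus_commute[of l0])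
  define d where "d = q - p"
  have "nrm d \<le> 2 * \<delta>"
    using nrm_triangle_diff[of q p x0] nrm_minus_commute[of x0 p] p(1) q(1) by (simp add: d_def)
  moreover have "\<rho> - \<delta> < s" "\<rho> - \<delta> < 1 - s"
    using nrm_triangle_diff[of l0 x0 p] nrm_triangle_diff[of l1 x0 p] assms(7,8) lengths p(1)
    by (auto simp: nball_def)
  moreover have "\<bar>s - t\<bar> \<le> 2 * \<delta>"
    using nrm_triangle_diff[of lb1 l0 q] nrm_triangle_diff[of q l0 p]
      nrm_triangle_diff[of l1 lb0 p] nrm_triangle_diff[of p lb0 q]
      nrm_minus_commute[of p q] nrm_minus_commute[of p l0] assms(3,4) lengths \<open>nrm d \<le> 2 * \<delta>\<close>
    by (simp add: d_def)
  moreover have "lb1 - l0 = (1 - t) *\<^sub>R (lb1 - lb0) + s *\<^sub>R (l1 - l0) + d"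
    "l1 - lb0 = t *\<^sub>R (lb1 - lb0) + (1 - s) *\<^sub>R (l1 - l0) - d"
    unfolding d_def p(4) q(4) by (simp_all add: algebra_simps)
  ultimately show thesis
    using that by blast
qed

end

theorem theorem5p1:
  fixes nrm :: "real^'n \<Rightarrow> real" and N :: "real^'n \<Rightarrow> real^'n"
    and \<Lambda> \<delta> \<rho> \<kappa> :: real and l0 l1 lb0 lb1 x0 :: "real^'n"
  assumes norm: "is_norm nrm"
    and strict: "strictly_convex_norm nrm"
    and grad: "\<And>x. x \<noteq> 0 \<Longrightarrow> (nrm has_derivative (\<lambda>v. v \<bullet> N x)) (at x)"
    and C1: "continuous_on (UNIV - {0}) N"
    and geo: "geometrically_convex nrm N \<Lambda>"
    and Lam: "\<Lambda> > 2"
    and h1: "nrm (l1 - lb0) \<ge> nrm (l1 - l0)"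
    and h2: "nrm (lb1 - l0) \<ge> nrm (lb1 - lb0)"
    and h3: "nrm (l1 - l0) = 1" and h4: "nrm (lb1 - lb0) = 1"
    and del: "0 < \<delta>" "\<delta> < 1/4"
    and int1: "closed_segment l0 l1 \<inter> nball nrm x0 \<delta> \<noteq> {}"
    and int2: "closed_segment lb0 lb1 \<inter> nball nrm x0 \<delta> \<noteq> {}"
    and rho: "\<rho> > 3 * \<delta>"
    and out: "l1 \<notin> nball nrm x0 \<rho>" "l0 \<notin> nball nrm x0 \<rho>"
    and kap: "\<kappa> \<ge> 4 / (\<rho> - 3 * \<delta>)"
    and sig: "sigma nrm N (l1 - l0) (\<kappa> * \<delta>) \<le> sigma nrm N (lb1 - lb0) (\<kappa> * \<delta>)"
  shows "hfun nrm N (lb1 - lb0) (lb1 - l0) + hfun nrm N (lb1 - lb0) (l1 - lb0)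
           \<le> \<Lambda> / (\<Lambda> - 2) * sigma nrm N (lb1 - lb0) (\<kappa> * \<delta>)"
  \<comment> \<open>Strict convexity, continuity of \<open>N\<close>, \<open>\<delta> < 1/4\<close> and the comparison \<open>sig\<close> of the two
      \<open>\<sigma>\<close>-values are not needed for this estimate.\<close>
proof -
  have far: "1 \<le> nrm (lb1 - l0)" "1 \<le> nrm (l1 - lb0)"
    using h1 h2 h3 h4 by simp_all
  obtain s t d where dec: "lb1 - l0 = (1 - t) *\<^sub>R (lb1 - lb0) + s *\<^sub>R (l1 - l0) + d"
      "l1 - lb0 = t *\<^sub>R (lb1 - lb0) + (1 - s) *\<^sub>R (l1 - l0) - d"
    and d: "nrm d \<le> 2 * \<delta>" and s: "\<rho> - \<delta> < s" "\<rho> - \<delta> < 1 - s" and st: "\<bar>s - t\<bar> \<le> 2 * \<delta>"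
    using unit_segments_near_point[OF norm h3 h4 far int1 int2 out(2,1)] by blast
  have "\<kappa> > 0"
    using rho kap divide_pos_pos[of 4 "\<rho> - 3 * \<delta>"] by linarith
  define m where "m = 2 / \<kappa>"
  have "0 < m"
    using \<open>\<kappa> > 0\<close> by (simp add: m_def)
  have "2 * m \<le> \<rho> - 3 * \<delta>"
    using kap rho \<open>\<kappa> > 0\<close> by (simp add: m_def pos_divide_le_eq mult.commute)
  have "nrm d \<le> m * (\<kappa> * \<delta>)"
    using d \<open>\<kappa> > 0\<close> by (simp add: m_def)
  have "lb1 - lb0 \<noteq> 0"
    using h4 nrm_zero[OF norm] by auto
  show ?thesis
    by (rule hfun_pair_le_sigma[OF norm grad[OF \<open>lb1 - lb0 \<noteq> 0\<close>] geo Lam \<open>lb1 - lb0 \<noteq> 0\<close> _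
          \<open>0 < m\<close> _ _ _ _ \<open>nrm d \<le> m * (\<kappa> * \<delta>)\<close> dec])
      (use far h3 h4 s st del \<open>0 < m\<close> \<open>2 * m \<le> \<rho> - 3 * \<delta>\<close> in arith)+
qed

end
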